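(* (i) For every nondeterministic finite automaton with $n$ states there is an IFA with at most $2^n$ states accepting the same language. (ii) For every $n \ge 3$ there exists a nondeterministic finite automaton with $n$ states such that every IFA accepting the same language has at least $2^n - 1$ states. In particular, the worst-case state blowup for converting NFAs to IFAs is $\Theta(2^n)$.
   Context: A $\mathbb{Q}$-weighted automaton $\mathcal{A} = (Q, \Sigma, M, \alpha, \eta)$ consists of a finite state set $Q$, finite alphabet $\Sigma$, $M : \Sigma \to \mathbb{Q}^{Q\times Q}$, initial row vector $\alpha \in \mathbb{Q}^Q$, final column vector $\eta \in \mathbb{Q}^Q$; with $M(a_1\cdots a_k) = M(a_1)\cdots M(a_k)$, it assigns $L_\mathcal{A}(w) = \alpha M(w)\eta$ to each $w \in \Sigma^*$. It is an IFA if $L_\mathcal{A}(w) \in \{0,1\}$ for all $w$, and then its language is $L(\mathcal{A}) = \{w \mid L_\mathcal{A}(w) = 1\}$. The number of states of $\mathcal{A}$ is $|Q|$. *)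

theory Defs
  imports Complex_Main
begin

text \<open>States are {0..<n}; the alphabet is an explicit finite set Sigma.
  A weighted automaton: alphabet, number of states, transition matrices M a,
  initial row vector alpha, final column vector eta.\<close>

record 'a qwa =
  wsig   :: "'a set"
  wn     :: nat
  wM     :: "'a \<Rightarrow> nat \<Rightarrow> nat \<Rightarrow> rat"
  walpha :: "nat \<Rightarrow> rat"
  weta   :: "nat \<Rightarrow> rat"

definition qwa_wf :: "'a qwa \<Rightarrow> bool" where
  "qwa_wf A \<longleftrightarrow> finite (wsig A)"

definition vec_step :: "'a qwa \<Rightarrow> (nat \<Rightarrow> rat) \<Rightarrow> 'a \<Rightarrow> (nat \<Rightarrow> rat)" where
  "vec_step A v a = (\<lambda>j. \<Sum>i<wn A. v i * wM A a i j)"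

definition qwa_weight :: "'a qwa \<Rightarrow> 'a list \<Rightarrow> rat" where
  "qwa_weight A w = (\<Sum>j<wn A. foldl (vec_step A) (walpha A) w j * weta A j)"

definition is_IFA :: "'a qwa \<Rightarrow> bool" where
  "is_IFA A \<longleftrightarrow> qwa_wf A \<and> (\<forall>w \<in> lists (wsig A). qwa_weight A w \<in> {0, 1})"

definition IFA_lang :: "'a qwa \<Rightarrow> 'a list set" where
  "IFA_lang A = {w \<in> lists (wsig A). qwa_weight A w = 1}"

record 'a nfa =
  nsig   :: "'a set"
  nn     :: nat
  ndelta :: "nat \<Rightarrow> 'a \<Rightarrow> nat set"
  ninit  :: "nat set"
  nfinal :: "nat set"

definition nfa_wf :: "'a nfa \<Rightarrow> bool" where
  "nfa_wf N \<longleftrightarrow> finite (nsig N) \<and> ninit N \<subseteq> {..<nn N} \<and> nfinal N \<subseteq> {..<nn N}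
     \<and> (\<forall>q<nn N. \<forall>a\<in>nsig N. ndelta N q a \<subseteq> {..<nn N})"

definition nfa_step :: "'a nfa \<Rightarrow> nat set \<Rightarrow> 'a \<Rightarrow> nat set" where
  "nfa_step N S a = (\<Union>q\<in>S. ndelta N q a)"

definition nfa_lang :: "'a nfa \<Rightarrow> 'a list set" where
  "nfa_lang N = {w \<in> lists (nsig N). foldl (nfa_step N) (ninit N) w \<inter> nfinal N \<noteq> {}}"

end

theory Submission
  imports Defs "HOL-Library.Nat_Bijection"
begin

text \<open>
  (i) The subset construction, read as a weighted automaton whose states are the \<open>2^n\<close> sets of
  NFA states and whose transition matrices are deterministic 0/1 matrices, computes the
  characteristic function of the NFA language.

  (ii) Let the NFA have states and letters \<open>{0..<n}\<close>, all states initial and final, and let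
  reading letter \<open>q\<close> kill state \<open>q\<close>: it accepts the words missing some letter. If the letters of
  \<open>u\<^sub>S\<close> are exactly those outside \<open>S\<close>, then \<open>u\<^sub>S u\<^sub>T\<close> is accepted iff \<open>S \<inter> T \<noteq> {}\<close>, and this
  matrix, indexed by nonempty \<open>S, T\<close>, is nonsingular by Moebius inversion on the subset lattice.
  For an IFA with \<open>m\<close> states, \<open>L(u\<^sub>S v) = (\<alpha> M(u\<^sub>S)) (M(v) \<eta>)\<close> factors through \<open>\<rat>\<^sup>m\<close>, so any
  \<open>m + 1\<close> of its rows are linearly dependent.
\<close>

lemma set_encode_less_power:
  assumes "S \<subseteq> {..<n}"
  shows "set_encode S < 2 ^ n"
proof -
  have "set_encode S \<le> (\<Sum>i<n. 2 ^ i)"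
    unfolding set_encode_def by (rule sum_mono2) (use assms in auto)
  also have "\<dots> < 2 ^ n"
    using sum_power2[of n] by (simp add: atLeast0LessThan)
  finally show ?thesis .
qed

lemma qwa_weight_IFA:
  assumes "is_IFA A" "w \<in> lists (wsig A)"
  shows "qwa_weight A w = of_bool (w \<in> IFA_lang A)"
  using assms by (auto simp: is_IFA_def IFA_lang_def)

lemma nfa_step_subset:
  assumes "nfa_wf N" "S \<subseteq> {..<nn N}" "a \<in> nsig N"
  shows "nfa_step N S a \<subseteq> {..<nn N}"
  using assms unfolding nfa_wf_def nfa_step_def by blast

lemma foldl_nfa_step_subset:
  assumes "nfa_wf N" "S \<subseteq> {..<nn N}" "w \<in> lists (nsig N)"
  shows "foldl (nfa_step N) S w \<subseteq> {..<nn N}"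
  using assms(2,3) by (induction w arbitrary: S) (auto simp: nfa_step_subset[OF assms(1)])

definition subset_automaton :: "'a nfa \<Rightarrow> 'a qwa" where
  "subset_automaton N = \<lparr> wsig = nsig N, wn = 2 ^ nn N,
     wM = (\<lambda>a k l. of_bool (l = set_encode (nfa_step N (set_decode k) a))),
     walpha = (\<lambda>k. of_bool (k = set_encode (ninit N))),
     weta = (\<lambda>k. of_bool (set_decode k \<inter> nfinal N \<noteq> {})) \<rparr>"

lemma wsig_subset_automaton [simp]: "wsig (subset_automaton N) = nsig N"
  and wn_subset_automaton [simp]: "wn (subset_automaton N) = 2 ^ nn N"
  by (simp_all add: subset_automaton_def)

lemma vec_step_subset_automaton:
  assumes "S \<subseteq> {..<nn N}"
  shows "vec_step (subset_automaton N) (\<lambda>l. of_bool (l = set_encode S)) a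
       = (\<lambda>l. of_bool (l = set_encode (nfa_step N S a)))"
proof -
  have "finite S" using assms finite_subset by blast
  moreover have "{..<2 ^ nn N} \<inter> {i. i = set_encode S} = {set_encode S}"
    using set_encode_less_power[OF assms] by auto
  ultimately show ?thesis
    by (simp add: vec_step_def subset_automaton_def)
qed

lemma foldl_vec_step_subset_automaton:
  assumes "nfa_wf N" "S \<subseteq> {..<nn N}" "w \<in> lists (nsig N)"
  shows "foldl (vec_step (subset_automaton N)) (\<lambda>l. of_bool (l = set_encode S)) w
       = (\<lambda>l. of_bool (l = set_encode (foldl (nfa_step N) S w)))"
  using assms(2,3)
proof (induction w arbitrary: S)
  case (Cons a w)
  then show ?case
    by (simp add: vec_step_subset_automaton nfa_step_subset[OF assms(1)])
qed simp

lemma qwa_weight_subset_automaton: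
  assumes "nfa_wf N" "w \<in> lists (nsig N)"
  shows "qwa_weight (subset_automaton N) w
       = of_bool (foldl (nfa_step N) (ninit N) w \<inter> nfinal N \<noteq> {})"
proof -
  define F where "F = foldl (nfa_step N) (ninit N) w"
  have init: "ninit N \<subseteq> {..<nn N}" using assms(1) by (simp add: nfa_wf_def)
  have F: "F \<subseteq> {..<nn N}"
    unfolding F_def using foldl_nfa_step_subset[OF assms(1) init assms(2)] .
  have "walpha (subset_automaton N) = (\<lambda>l. of_bool (l = set_encode (ninit N)))"
    by (simp add: subset_automaton_def)
  then have "foldl (vec_step (subset_automaton N)) (walpha (subset_automaton N)) w
           = (\<lambda>l. of_bool (l = set_encode F))"
    unfolding F_def using foldl_vec_step_subset_automaton[OF assms(1) init assms(2)] by simp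
  moreover have "finite F" using F finite_subset by blast
  moreover have "{..<2 ^ nn N} \<inter> {i. i = set_encode F} = {set_encode F}"
    using set_encode_less_power[OF F] by auto
  ultimately show ?thesis
    by (simp add: qwa_weight_def subset_automaton_def F_def)
qed

lemma is_IFA_subset_automaton: "nfa_wf N \<Longrightarrow> is_IFA (subset_automaton N)"
  by (simp add: is_IFA_def qwa_wf_def nfa_wf_def qwa_weight_subset_automaton)

lemma IFA_lang_subset_automaton: "nfa_wf N \<Longrightarrow> IFA_lang (subset_automaton N) = nfa_lang N"
  by (simp add: IFA_lang_def nfa_lang_def qwa_weight_subset_automaton cong: conj_cong)

lemma dependent_if_card_greater:
  fixes x :: "'i \<Rightarrow> nat \<Rightarrow> 'a::field"
  assumes "finite I" "m < card I"
  shows "\<exists>c. (\<exists>i\<in>I. c i \<noteq> 0) \<and> (\<forall>j<m. (\<Sum>i\<in>I. c i * x i j) = 0)"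
  using assms
proof (induction m arbitrary: I x)
  case 0
  then obtain i where "i \<in> I" by fastforce
  then show ?case by (intro exI[of _ "\<lambda>_. 1"]) auto
next
  case (Suc m)
  show ?case
  proof (cases "\<exists>p\<in>I. x p m \<noteq> 0")
    case False
    obtain c where "\<exists>i\<in>I. c i \<noteq> 0" "\<forall>j<m. (\<Sum>i\<in>I. c i * x i j) = 0"
      using Suc.IH[of I x] Suc.prems by auto
    with False show ?thesis by (auto simp: less_Suc_eq)
  next
    case True
    then obtain p where p: "p \<in> I" "x p m \<noteq> 0" by blast
    define y where "y i j = x i j - x i m / x p m * x p j" for i j
    have "m < card (I - {p})" using Suc.prems p by simp
    then obtain d where d: "\<exists>i\<in>I - {p}. d i \<noteq> 0" "\<forall>j<m. (\<Sum>i\<in>I - {p}. d i * y i j) = 0"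
      using Suc.IH[of "I - {p}" y] Suc.prems(1) by blast
    define c where "c = d(p := - (\<Sum>i\<in>I - {p}. d i * x i m) / x p m)"
    \<comment> \<open>eliminating coordinate \<open>m\<close> with the pivot \<open>x p\<close> turns \<open>d\<close> into a relation among the \<open>x i\<close>\<close>
    have eliminate: "(\<Sum>i\<in>I. c i * x i j) = (\<Sum>i\<in>I - {p}. d i * y i j)" for j
    proof -
      have "(\<Sum>i\<in>I. c i * x i j) = c p * x p j + (\<Sum>i\<in>I - {p}. d i * x i j)"
        using Suc.prems(1) p(1) by (simp add: sum.remove c_def)
      moreover have "(\<Sum>i\<in>I - {p}. d i * y i j)
          = (\<Sum>i\<in>I - {p}. d i * x i j) - (\<Sum>i\<in>I - {p}. d i * x i m) / x p m * x p j"
        by (simp add: y_def right_diff_distrib sum_subtractf sum_distrib_right sum_divide_distrib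
            mult.assoc)
      ultimately show ?thesis by (simp add: c_def)
    qed
    have "(\<Sum>i\<in>I. c i * x i j) = 0" if "j < Suc m" for j
      using that d(2) p(2) by (auto simp: eliminate less_Suc_eq y_def)
    moreover have "\<exists>i\<in>I. c i \<noteq> 0" using d(1) by (auto simp: c_def)
    ultimately show ?thesis by blast
  qed
qed

lemma vec_step_sum:
  "vec_step A (\<lambda>j. \<Sum>i\<in>I. c i * v i j) a = (\<lambda>j. \<Sum>i\<in>I. c i * vec_step A (v i) a j)"
  unfolding vec_step_def
  by (auto simp: sum_distrib_left sum_distrib_right mult.assoc intro: sum.swap)

lemma foldl_vec_step_sum:
  "foldl (vec_step A) (\<lambda>j. \<Sum>i\<in>I. c i * v i j) w
   = (\<lambda>j. \<Sum>i\<in>I. c i * foldl (vec_step A) (v i) w j)"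
proof (induction w arbitrary: v)
  case (Cons a w)
  show ?case using Cons.IH[of "\<lambda>i. vec_step A (v i) a"] by (simp add: vec_step_sum)
qed simp

lemma foldl_vec_step_vanishing:
  assumes "\<forall>i<wn A. v i = 0" "j < wn A"
  shows "foldl (vec_step A) v w j = 0"
proof (cases w)
  case (Cons a w')
  have "vec_step A v a = (\<lambda>_. 0)"
    using assms(1) by (simp add: vec_step_def)
  moreover have "foldl (vec_step A) (\<lambda>_. 0) w' = (\<lambda>_. 0)"
    by (induction w') (simp_all add: vec_step_def)
  ultimately show ?thesis using Cons by simp
qed (use assms in simp)

lemma card_le_wn_if_hankel_rows_independent:
  fixes u :: "'i \<Rightarrow> 'a list"
  assumes "finite I"
    and independent: "\<And>c. \<forall>v\<in>V. (\<Sum>i\<in>I. c i * qwa_weight A (u i @ v)) = 0 \<Longrightarrow> \<forall>i\<in>I. c i = 0"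
  shows "card I \<le> wn A"
proof (rule ccontr)
  assume "\<not> card I \<le> wn A"
  define x where "x i = foldl (vec_step A) (walpha A) (u i)" for i
  obtain c where c: "\<exists>i\<in>I. c i \<noteq> 0" "\<forall>j<wn A. (\<Sum>i\<in>I. c i * x i j) = 0"
    using dependent_if_card_greater[OF \<open>finite I\<close>, of "wn A" x] \<open>\<not> card I \<le> wn A\<close> by auto
  have "(\<Sum>i\<in>I. c i * qwa_weight A (u i @ v)) = 0" for v
  proof -
    have "(\<Sum>i\<in>I. c i * qwa_weight A (u i @ v))
        = (\<Sum>j<wn A. foldl (vec_step A) (\<lambda>k. \<Sum>i\<in>I. c i * x i k) v j * weta A j)"
      by (simp add: qwa_weight_def x_def foldl_vec_step_sum sum_distrib_left sum_distrib_right
          mult.assoc sum.swap[of _ I])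
    also have "\<dots> = 0"
      using c(2) by (simp add: foldl_vec_step_vanishing)
    finally show ?thesis .
  qed
  with independent c(1) show False by blast
qed

lemma eq_0_if_subset_sums_eq_0:
  fixes c :: "'a set \<Rightarrow> 'b::comm_monoid_add"
  assumes "finite I" "\<forall>S\<in>I. finite S"
    and sums: "\<And>S. S \<in> I \<Longrightarrow> (\<Sum>T\<in>{T\<in>I. T \<subseteq> S}. c T) = 0"
  shows "S \<in> I \<Longrightarrow> c S = 0"
proof (induction "card S" arbitrary: S rule: less_induct)
  case less
  have "{T\<in>I. T \<subseteq> S} = insert S {T\<in>I. T \<subset> S}"
    using less.prems by auto
  then have "(\<Sum>T\<in>{T\<in>I. T \<subseteq> S}. c T) = c S + (\<Sum>T\<in>{T\<in>I. T \<subset> S}. c T)"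
    using \<open>finite I\<close> by simp
  moreover have "c T = 0" if "T \<in> I" "T \<subset> S" for T
    using less that assms(2) psubset_card_mono by blast
  ultimately show ?case
    using sums[OF less.prems] by simp
qed

lemma intersection_matrix_nonsingular:
  fixes c :: "nat set \<Rightarrow> 'b::comm_ring_1"
  assumes "finite K"
    and rows: "\<And>T. T \<subseteq> K \<Longrightarrow> T \<noteq> {} \<Longrightarrow>
      (\<Sum>S | S \<subseteq> K \<and> S \<noteq> {}. c S * of_bool (S \<inter> T \<noteq> {})) = 0"
  shows "S \<subseteq> K \<Longrightarrow> S \<noteq> {} \<Longrightarrow> c S = 0"
proof -
  define I where "I = {S. S \<subseteq> K \<and> S \<noteq> {}}"
  have "finite I" unfolding I_def using \<open>finite K\<close> by simp
  have rows': "(\<Sum>S\<in>I. c S * of_bool (S \<inter> T \<noteq> {})) = 0" if "T \<subseteq> K" for T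
    using rows[OF that] unfolding I_def by (cases "T = {}") simp_all
  \<comment> \<open>\<open>S \<subseteq> U\<close> iff \<open>S\<close> meets \<open>K\<close> but not \<open>K - U\<close>\<close>
  have subset_sums: "(\<Sum>T\<in>{T\<in>I. T \<subseteq> U}. c T) = 0" if "U \<subseteq> K" for U
  proof -
    have "(\<Sum>T\<in>{T\<in>I. T \<subseteq> U}. c T)
        = (\<Sum>S\<in>I. c S * of_bool (S \<inter> K \<noteq> {}) - c S * of_bool (S \<inter> (K - U) \<noteq> {}))"
      using \<open>finite I\<close> by (simp add: sum.inter_filter) (rule sum.cong, auto simp: I_def)
    also have "\<dots> = 0"
      using rows'[of K] rows'[of "K - U"] by (simp add: sum_subtractf)
    finally show ?thesis .
  qed
  have finite_members: "\<forall>S\<in>I. finite S"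
    unfolding I_def using \<open>finite K\<close> by (auto intro: finite_subset)
  have "c S = 0" if "S \<in> I" for S
  proof (rule eq_0_if_subset_sums_eq_0[OF \<open>finite I\<close> finite_members _ that])
    show "(\<Sum>T\<in>{T\<in>I. T \<subseteq> S'}. c T) = 0" if "S' \<in> I" for S'
      using that by (intro subset_sums) (simp add: I_def)
  qed
  then show "S \<subseteq> K \<Longrightarrow> S \<noteq> {} \<Longrightarrow> c S = 0"
    by (simp add: I_def)
qed

definition missing_letter_nfa :: "nat \<Rightarrow> nat nfa" where
  "missing_letter_nfa n = \<lparr> nsig = {..<n}, nn = n, ndelta = (\<lambda>q a. if q = a then {} else {q}),
     ninit = {..<n}, nfinal = {..<n} \<rparr>"

lemma nsig_missing_letter_nfa [simp]: "nsig (missing_letter_nfa n) = {..<n}"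
  and nn_missing_letter_nfa [simp]: "nn (missing_letter_nfa n) = n"
  by (simp_all add: missing_letter_nfa_def)

lemma nfa_wf_missing_letter_nfa: "nfa_wf (missing_letter_nfa n)"
  by (auto simp: nfa_wf_def missing_letter_nfa_def)

lemma foldl_nfa_step_missing_letter_nfa:
  "foldl (nfa_step (missing_letter_nfa n)) S w = S - set w"
proof (induction w arbitrary: S)
  case (Cons a w)
  have "nfa_step (missing_letter_nfa n) S a = S - {a}"
    by (auto simp: nfa_step_def missing_letter_nfa_def)
  with Cons show ?case by auto
qed simp

lemma nfa_lang_missing_letter_nfa:
  "nfa_lang (missing_letter_nfa n) = {w \<in> lists {..<n}. \<not> {..<n} \<subseteq> set w}"
  by (auto simp: nfa_lang_def foldl_nfa_step_missing_letter_nfa) (auto simp: missing_letter_nfa_def)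

lemma wn_ge_if_IFA_lang_missing_letter_nfa:
  assumes "is_IFA A" "wsig A = {..<n}" "IFA_lang A = nfa_lang (missing_letter_nfa n)"
  shows "2 ^ n - 1 \<le> wn A"
proof -
  define I where "I = {S. S \<subseteq> {..<n} \<and> S \<noteq> {}}"
  define u where "u S = sorted_list_of_set ({..<n} - S)" for S
  have hankel: "qwa_weight A (u S @ u T) = of_bool (S \<inter> T \<noteq> {})"
    if "S \<subseteq> {..<n}" for S T
  proof -
    have letters: "set (u S @ u T) = {..<n} - (S \<inter> T)" by (auto simp: u_def)
    then have word: "u S @ u T \<in> lists (wsig A)" using assms(2) by auto
    have "u S @ u T \<in> IFA_lang A \<longleftrightarrow> \<not> {..<n} \<subseteq> {..<n} - (S \<inter> T)"
      using assms(2,3) word letters by (simp add: nfa_lang_missing_letter_nfa)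
    also have "\<dots> \<longleftrightarrow> S \<inter> T \<noteq> {}"
      using that by blast
    finally show ?thesis using qwa_weight_IFA[OF assms(1) word] by simp
  qed
  have "card I \<le> wn A"
  proof (rule card_le_wn_if_hankel_rows_independent)
    show "finite I" by (simp add: I_def)
    fix c assume rows: "\<forall>v\<in>u ` I. (\<Sum>S\<in>I. c S * qwa_weight A (u S @ v)) = 0"
    have "(\<Sum>S\<in>I. c S * of_bool (S \<inter> T \<noteq> {})) = 0" if "T \<subseteq> {..<n}" "T \<noteq> {}" for T
    proof -
      have "(\<Sum>S\<in>I. c S * of_bool (S \<inter> T \<noteq> {})) = (\<Sum>S\<in>I. c S * qwa_weight A (u S @ u T))"
        by (rule sum.cong) (simp_all add: hankel I_def)
      also have "\<dots> = 0"
        using rows that by (simp add: I_def)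
      finally show ?thesis .
    qed
    then have "c S = 0" if "S \<subseteq> {..<n}" "S \<noteq> {}" for S
      using that
      by (rule intersection_matrix_nonsingular[of "{..<n}" c, folded I_def, OF finite_lessThan])
    then show "\<forall>S\<in>I. c S = 0" by (simp add: I_def)
  qed
  moreover have "I = Pow {..<n} - {{}}" by (auto simp: I_def)
  then have "card I = 2 ^ n - 1" by (simp add: card_Pow)
  ultimately show ?thesis by simp
qed

theorem proposition4:
  shows "(\<forall>N :: 'a nfa. nfa_wf N \<longrightarrow>
            (\<exists>A :: 'a qwa. is_IFA A \<and> wsig A = nsig N \<and> IFA_lang A = nfa_lang N
                            \<and> wn A \<le> 2 ^ nn N))
       \<and> (\<forall>n::nat. n \<ge> 3 \<longrightarrow>
            (\<exists>N :: nat nfa. nfa_wf N \<and> nn N = n \<and>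
               (\<forall>A :: nat qwa. is_IFA A \<and> wsig A = nsig N \<and> IFA_lang A = nfa_lang N
                               \<longrightarrow> wn A \<ge> 2 ^ n - 1)))"
proof (intro conjI allI impI)
  fix N :: "'a nfa"
  assume "nfa_wf N"
  then show "\<exists>A. is_IFA A \<and> wsig A = nsig N \<and> IFA_lang A = nfa_lang N \<and> wn A \<le> 2 ^ nn N"
    by (intro exI[of _ "subset_automaton N"])
      (simp add: is_IFA_subset_automaton IFA_lang_subset_automaton)
next
  \<comment> \<open>the lower bound holds for every \<open>n\<close>\<close>
  fix n :: nat
  show "\<exists>N :: nat nfa. nfa_wf N \<and> nn N = n \<and>
          (\<forall>A. is_IFA A \<and> wsig A = nsig N \<and> IFA_lang A = nfa_lang N \<longrightarrow> wn A \<ge> 2 ^ n - 1)"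
    using nfa_wf_missing_letter_nfa wn_ge_if_IFA_lang_missing_letter_nfa
    by (intro exI[of _ "missing_letter_nfa n"]) auto
qed

end
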